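(* Let $(A,B,s,t,\Delta)$ be a left multiplier bialgebroid, and let $I^s\subseteq B$ be the linear span of all $\phi(a)$ with $a\in A$ and $\phi\colon A\to B$ linear satisfying $\phi(s(x)a)=x\phi(a)$ for all $x\in B,a\in A$, and $I^t\subseteq B$ the linear span of all $\psi(a)$ with $a\in A$ and $\psi\colon A\to B$ linear satisfying $\psi(t(x)a)=\psi(a)x$ for all $x,a$. If $s(I^t)A=A=t(I^s)A$, then $I^t=I^tI^s=I^s$ and this is an idempotent, essential two-sided ideal in $B$.
   Context: All algebras are associative complex algebras, not necessarily unital. For an algebra $A$ with $A_A$ non-degenerate, $L(A)$ denotes right $A$-module endomorphisms of $A$ (containing $A$ via left multiplication) and $M(A)=\{T\in L(A):aT\in A\ \forall a\}$. A left multiplier bialgebroid is a tuple $(A,B,s,t,\Delta)$: (i) $A,B$ algebras, $A_A$ non-degenerate and idempotent; (ii) $s\colon B\to M(A)$ homomorphism, $t\colon B\to M(A)$ anti-homomorphism with commuting images, $s,t$ injective, $s(B)A=A=t(B)A$; ${}_BA\otimes A^B$, the quotient of $A\otimes A$ by the span of $s(x)a\otimes b-a\otimes t(x)b$, is non-degenerate as a right module over $A\otimes1$ and $1\otimes A$; (iii) $\Delta$ is an algebra homomorphism into the algebra of endomorphisms $T$ of ${}_BA\otimes A^B$ for which $T(a\otimes1),T(1\otimes b)\in{}_BA\otimes A^B$ exist with $T(a\otimes b)=T(a\otimes1)(1\otimes b)=T(1\otimes b)(a\otimes1)$; (iv) $\Delta(s(x)t(y)as(x')t(y'))=(t(y)\otimes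 s(x))\Delta(a)(t(y')\otimes s(x'))$; (v) if $\Delta(b)(1\otimes c)=\sum p_i\otimes q_i$ and $\Delta(b)(a\otimes1)=\sum u_j\otimes v_j$ then $\sum\Delta(p_i)(a\otimes1)\otimes q_i=\sum u_j\otimes\Delta(v_j)(1\otimes c)$ in $A^{\otimes3}$ modulo the span of $s(x)a\otimes b\otimes c-a\otimes t(x)b\otimes c$ and $a\otimes s(x)b\otimes c-a\otimes b\otimes t(x)c$. A two-sided ideal $I$ of $B$ is essential if $xI=0$ or $Ix=0$ implies $x=0$; idempotent means $II=I$. *)

theory Defs
  imports Complex_Main "HOL-Library.Function_Algebras"
begin

definition cplx_algebra :: "(complex \<Rightarrow> 'a::ring \<Rightarrow> 'a) \<Rightarrow> bool" where
  "cplx_algebra sc \<longleftrightarrow> vector_space sc \<and>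
     (\<forall>c a b. sc c (a * b) = sc c a * b \<and> sc c (a * b) = a * sc c b)"

definition span_prod ::
  "(complex \<Rightarrow> 'c \<Rightarrow> 'c) \<Rightarrow> ('a \<Rightarrow> 'b \<Rightarrow> 'c::ab_group_add) \<Rightarrow> 'a set \<Rightarrow> 'b set \<Rightarrow> 'c set" where
  "span_prod sc m X Y = module.span sc {m x y | x y. x \<in> X \<and> y \<in> Y}"

text \<open>The free complex vector space on words of length n: finitely supported
  functions 'a list \<Rightarrow> complex; tdelta w is the basis vector of the word w,
  which stands for the elementary tensor w!0 \<otimes> ... \<otimes> w!(n-1).\<close>
definition tdelta :: "'a list \<Rightarrow> 'a list \<Rightarrow> complex" where
  "tdelta w = (\<lambda>v. if v = w then 1 else 0)"

definition fscale :: "complex \<Rightarrow> ('x \<Rightarrow> complex) \<Rightarrow> ('x \<Rightarrow> complex)" where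
  "fscale c f = (\<lambda>v. c * f v)"

text \<open>Relations: multilinearity in every slot (giving A^{\<otimes>n}), plus balancing
  s(x)a \<otimes> b \<sim> a \<otimes> t(x)b in every pair of adjacent slots (i,i+1).
  sL x a is s(x)a, tL x a is t(x)a.\<close>
definition trel ::
  "(complex \<Rightarrow> 'a::ring \<Rightarrow> 'a) \<Rightarrow> ('b \<Rightarrow> 'a \<Rightarrow> 'a) \<Rightarrow> ('b \<Rightarrow> 'a \<Rightarrow> 'a) \<Rightarrow> nat
    \<Rightarrow> ('a list \<Rightarrow> complex) set" where
  "trel scA sL tL n =
     {tdelta (u @ [a + a'] @ v) - tdelta (u @ [a] @ v) - tdelta (u @ [a'] @ v)
        | u v a a'. length u + length v + 1 = n}
   \<union> {tdelta (u @ [scA c a] @ v) - fscale c (tdelta (u @ [a] @ v))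
        | u v c a. length u + length v + 1 = n}
   \<union> {tdelta (u @ [sL x a, b] @ v) - tdelta (u @ [a, tL x b] @ v)
        | u v x a b. length u + length v + 2 = n}"

text \<open>A representative of an element of the balanced tensor power is a list of
  words of length n (the sum of the corresponding elementary tensors;
  complex coefficients can be absorbed into the factors).\<close>
definition tens :: "'a list list \<Rightarrow> 'a list \<Rightarrow> complex" where
  "tens ws = sum_list (map tdelta ws)"

definition teq ::
  "(complex \<Rightarrow> 'a::ring \<Rightarrow> 'a) \<Rightarrow> ('b \<Rightarrow> 'a \<Rightarrow> 'a) \<Rightarrow> ('b \<Rightarrow> 'a \<Rightarrow> 'a) \<Rightarrow> nat
     \<Rightarrow> 'a list list \<Rightarrow> 'a list list \<Rightarrow> bool" where
  "teq scA sL tL n ws vs \<longleftrightarrow>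
     (\<forall>w \<in> set ws. length w = n) \<and> (\<forall>w \<in> set vs. length w = n) \<and>
     tens ws - tens vs \<in> module.span fscale (trel scA sL tL n)"

text \<open>Two-fold case: elements of the balanced tensor product _BA \<otimes> A^B,
  represented by lists of pairs [(a_i,b_i)] meaning \<Sum> a_i \<otimes> b_i.\<close>
definition teq2 ::
  "(complex \<Rightarrow> 'a::ring \<Rightarrow> 'a) \<Rightarrow> ('b \<Rightarrow> 'a \<Rightarrow> 'a) \<Rightarrow> ('b \<Rightarrow> 'a \<Rightarrow> 'a)
     \<Rightarrow> ('a \<times> 'a) list \<Rightarrow> ('a \<times> 'a) list \<Rightarrow> bool" where
  "teq2 scA sL tL xs ys =
     teq scA sL tL 2 (map (\<lambda>(a,b). [a,b]) xs) (map (\<lambda>(a,b). [a,b]) ys)"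

text \<open>X (c \<otimes> 1) and X (1 \<otimes> c).\<close>
definition rmul1 :: "('a::times \<times> 'a) list \<Rightarrow> 'a \<Rightarrow> ('a \<times> 'a) list" where
  "rmul1 X c = map (\<lambda>(p,q). (p * c, q)) X"
definition rmul2 :: "('a::times \<times> 'a) list \<Rightarrow> 'a \<Rightarrow> ('a \<times> 'a) list" where
  "rmul2 X c = map (\<lambda>(p,q). (p, q * c)) X"

definition lmul2 :: "('a \<Rightarrow> 'a) \<Rightarrow> ('a \<Rightarrow> 'a) \<Rightarrow> ('a \<times> 'a) list \<Rightarrow> ('a \<times> 'a) list" where
  "lmul2 f g X = map (\<lambda>(p,q). (f p, g q)) X"
definition tscale2 :: "(complex \<Rightarrow> 'a \<Rightarrow> 'a) \<Rightarrow> complex \<Rightarrow> ('a \<times> 'a) list \<Rightarrow> ('a \<times> 'a) list" where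
  "tscale2 scA c X = map (\<lambda>(p,q). (scA c p, q)) X"

text \<open>
  A :: 'a with scalar multiplication scA, B :: 'b with scB.
  s is given by sL x a = s(x)a together with sR a x = a s(x) (which exists in A
  since s(x) \<in> M(A); it is uniquely determined by sL by non-degeneracy of A_A).
  Likewise tL, tR for t.
  Delta a is the endomorphism \<Delta>(a) of _BA \<otimes> A^B, acting on representatives.\<close>
definition left_mult_bialgebroid ::
  "(complex \<Rightarrow> 'a::ring \<Rightarrow> 'a) \<Rightarrow> (complex \<Rightarrow> 'b::ring \<Rightarrow> 'b)
   \<Rightarrow> ('b \<Rightarrow> 'a \<Rightarrow> 'a) \<Rightarrow> ('a \<Rightarrow> 'b \<Rightarrow> 'a)
   \<Rightarrow> ('b \<Rightarrow> 'a \<Rightarrow> 'a) \<Rightarrow> ('a \<Rightarrow> 'b \<Rightarrow> 'a)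
   \<Rightarrow> ('a \<Rightarrow> ('a \<times> 'a) list \<Rightarrow> ('a \<times> 'a) list) \<Rightarrow> bool" where
  "left_mult_bialgebroid scA scB sL sR tL tR Delta \<longleftrightarrow>
   (let eq2 = teq2 scA sL tL; eq3 = teq scA sL tL 3 in
   \<comment> \<open>(i)\<close>
   cplx_algebra scA \<and> cplx_algebra scB \<and>
   (\<forall>a::'a. (\<forall>b. a * b = 0) \<longrightarrow> a = 0) \<and>
   span_prod scA (*) UNIV UNIV = UNIV \<and>
   \<comment> \<open>(ii) s, t take values in M(A)\<close>
   (\<forall>x. (\<forall>a b. sL x (a + b) = sL x a + sL x b) \<and> (\<forall>c a. sL x (scA c a) = scA c (sL x a))
        \<and> (\<forall>a b. sL x (a * b) = sL x a * b) \<and> (\<forall>a b. sR a x * b = a * sL x b)) \<and>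
   (\<forall>x. (\<forall>a b. tL x (a + b) = tL x a + tL x b) \<and> (\<forall>c a. tL x (scA c a) = scA c (tL x a))
        \<and> (\<forall>a b. tL x (a * b) = tL x a * b) \<and> (\<forall>a b. tR a x * b = a * tL x b)) \<and>
   \<comment> \<open>s homomorphism, t anti-homomorphism\<close>
   (\<forall>x y a. sL (x + y) a = sL x a + sL y a) \<and> (\<forall>c x a. sL (scB c x) a = scA c (sL x a)) \<and>
   (\<forall>x y a. sL (x * y) a = sL x (sL y a)) \<and>
   (\<forall>x y a. tL (x + y) a = tL x a + tL y a) \<and> (\<forall>c x a. tL (scB c x) a = scA c (tL x a)) \<and>
   (\<forall>x y a. tL (x * y) a = tL y (tL x a)) \<and>
   \<comment> \<open>commuting images, injectivity, fullness\<close>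
   (\<forall>x y a. sL x (tL y a) = tL y (sL x a)) \<and>
   inj sL \<and> inj tL \<and>
   span_prod scA sL UNIV UNIV = UNIV \<and> span_prod scA tL UNIV UNIV = UNIV \<and>
   \<comment> \<open>non-degeneracy of _BA \<otimes> A^B over A \<otimes> 1 and 1 \<otimes> A\<close>
   (\<forall>X. (\<forall>c. eq2 (rmul1 X c) []) \<longrightarrow> eq2 X []) \<and>
   (\<forall>X. (\<forall>c. eq2 (rmul2 X c) []) \<longrightarrow> eq2 X []) \<and>
   \<comment> \<open>(iii) each Delta a is a well-defined linear endomorphism of _BA \<otimes> A^B ...\<close>
   (\<forall>a X Y. eq2 X Y \<longrightarrow> eq2 (Delta a X) (Delta a Y)) \<and>
   (\<forall>a X Y. eq2 (Delta a (X @ Y)) (Delta a X @ Delta a Y)) \<and>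
   (\<forall>a c X. eq2 (Delta a (tscale2 scA c X)) (tscale2 scA c (Delta a X))) \<and>
   \<comment> \<open>... for which T(b \<otimes> 1) and T(1 \<otimes> c) exist ...\<close>
   (\<forall>a b. \<exists>P. \<forall>c. eq2 (Delta a [(b, c)]) (rmul2 P c)) \<and>
   (\<forall>a c. \<exists>Q. \<forall>b. eq2 (Delta a [(b, c)]) (rmul1 Q b)) \<and>
   \<comment> \<open>... and Delta is an algebra homomorphism\<close>
   (\<forall>a a' X. eq2 (Delta (a + a') X) (Delta a X @ Delta a' X)) \<and>
   (\<forall>c a X. eq2 (Delta (scA c a) X) (tscale2 scA c (Delta a X))) \<and>
   (\<forall>a a' X. eq2 (Delta (a * a') X) (Delta a (Delta a' X))) \<and>
   \<comment> \<open>(iv)\<close>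
   (\<forall>x y x' y' a X. eq2 (Delta (sL x (tL y (tR (sR a x') y'))) X)
                         (lmul2 (tL y) (sL x) (Delta a (lmul2 (tL y') (sL x') X)))) \<and>
   \<comment> \<open>(v) coassociativity; Ps!i represents \<Delta>(p_i)(a \<otimes> 1), Vs!j represents \<Delta>(v_j)(1 \<otimes> c)\<close>
   (\<forall>a b c ps us Ps Vs.
      (\<forall>a'. eq2 (Delta b [(a', c)]) (rmul1 ps a')) \<longrightarrow>
      (\<forall>c'. eq2 (Delta b [(a, c')]) (rmul2 us c')) \<longrightarrow>
      length Ps = length ps \<longrightarrow> length Vs = length us \<longrightarrow>
      (\<forall>i < length ps. \<forall>c'. eq2 (Delta (fst (ps ! i)) [(a, c')]) (rmul2 (Ps ! i) c')) \<longrightarrow>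
      (\<forall>j < length us. \<forall>a'. eq2 (Delta (snd (us ! j)) [(a', c)]) (rmul1 (Vs ! j) a')) \<longrightarrow>
      eq3 (concat (map (\<lambda>i. map (\<lambda>(x, y). [x, y, snd (ps ! i)]) (Ps ! i)) [0..<length ps]))
          (concat (map (\<lambda>j. map (\<lambda>(x, y). [fst (us ! j), x, y]) (Vs ! j)) [0..<length us]))))"

definition Is_set :: "(complex \<Rightarrow> 'a::ring \<Rightarrow> 'a) \<Rightarrow> (complex \<Rightarrow> 'b::ring \<Rightarrow> 'b)
   \<Rightarrow> ('b \<Rightarrow> 'a \<Rightarrow> 'a) \<Rightarrow> 'b set" where
  "Is_set scA scB sL = module.span scB
     {phi a | phi a. Vector_Spaces.linear scA scB phi \<and> (\<forall>x a'. phi (sL x a') = x * phi a')}"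

definition It_set :: "(complex \<Rightarrow> 'a::ring \<Rightarrow> 'a) \<Rightarrow> (complex \<Rightarrow> 'b::ring \<Rightarrow> 'b)
   \<Rightarrow> ('b \<Rightarrow> 'a \<Rightarrow> 'a) \<Rightarrow> 'b set" where
  "It_set scA scB tL = module.span scB
     {psi a | psi a. Vector_Spaces.linear scA scB psi \<and> (\<forall>x a'. psi (tL x a') = psi a' * x)}"

definition two_sided_ideal :: "'b::ring set \<Rightarrow> bool" where
  "two_sided_ideal I \<longleftrightarrow> 0 \<in> I \<and> (\<forall>x\<in>I. \<forall>y\<in>I. x + y \<in> I) \<and> (\<forall>x\<in>I. - x \<in> I) \<and>
     (\<forall>x\<in>I. \<forall>b. x * b \<in> I \<and> b * x \<in> I)"

definition essential_ideal :: "'b::ring set \<Rightarrow> bool" where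
  "essential_ideal I \<longleftrightarrow> (\<forall>x. ((\<forall>y\<in>I. x * y = 0) \<or> (\<forall>y\<in>I. y * x = 0)) \<longrightarrow> x = 0)"

definition idempotent_ideal :: "(complex \<Rightarrow> 'b::ring \<Rightarrow> 'b) \<Rightarrow> 'b set \<Rightarrow> bool" where
  "idempotent_ideal scB I \<longleftrightarrow> span_prod scB (*) I I = I"

end

theory Submission
  imports Defs
begin

text \<open>Every generator \<open>\<phi>(a)\<close> of \<open>I\<^sup>s\<close> satisfies \<open>x \<phi>(a) = \<phi>(s(x)a)\<close>, so \<open>I\<^sup>s\<close> is a left
  ideal; dually \<open>I\<^sup>t\<close> is a right ideal, and hence \<open>I\<^sup>t I\<^sup>s\<close> lies in both. Conversely,
  writing \<open>a = \<Sum> s(x\<^sub>i) b\<^sub>i\<close> with \<open>x\<^sub>i \<in> I\<^sup>t\<close> gives \<open>\<phi>(a) = \<Sum> x\<^sub>i \<phi>(b\<^sub>i) \<in> I\<^sup>t I\<^sup>s\<close>, and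
  writing \<open>a = \<Sum> t(y\<^sub>j) c\<^sub>j\<close> with \<open>y\<^sub>j \<in> I\<^sup>s\<close> gives \<open>\<psi>(a) = \<Sum> \<psi>(c\<^sub>j) y\<^sub>j \<in> I\<^sup>t I\<^sup>s\<close>. Essentiality: if \<open>x I\<^sup>s = 0\<close> then \<open>s(x)\<close> vanishes on
  \<open>s(I\<^sup>s)A = A\<close>, so \<open>x = 0\<close> by injectivity of \<open>s\<close>; symmetrically for \<open>t\<close>.\<close>

lemma linear_in_span:
  assumes "Vector_Spaces.linear s1 s2 f"
    and "\<And>z. z \<in> S \<Longrightarrow> f z \<in> module.span s2 T"
    and "x \<in> module.span s1 S"
  shows "f x \<in> module.span s2 T"
proof -
  interpret L: Vector_Spaces.linear s1 s2 f by fact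
  have "L.vs1.span S \<subseteq> f -` L.vs2.span T"
    using assms(2) by (intro L.vs1.span_minimal L.subspace_vimage L.vs2.subspace_span) auto
  with assms(3) show ?thesis by blast
qed

lemma cplx_algebra_module: "cplx_algebra sc \<Longrightarrow> module sc"
  unfolding cplx_algebra_def vector_space_def module_def by blast

lemma cplx_algebra_linear_mult_left:
  assumes "cplx_algebra sc"
  shows "Vector_Spaces.linear sc sc (\<lambda>z. y * z)"
  using assms unfolding cplx_algebra_def Vector_Spaces.linear_iff by (metis distrib_left)

lemma cplx_algebra_linear_mult_right:
  assumes "cplx_algebra sc"
  shows "Vector_Spaces.linear sc sc (\<lambda>z. z * y)"
  using assms unfolding cplx_algebra_def Vector_Spaces.linear_iff by (metis distrib_right)

lemma span_prod_subset_of_left_ideal: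
  assumes "module sc" "module.subspace sc I" "\<And>y z. z \<in> I \<Longrightarrow> y * z \<in> I"
  shows "span_prod sc (*) J I \<subseteq> I"
  unfolding span_prod_def using assms by (intro module.span_minimal) auto

lemma span_prod_subset_of_right_ideal:
  assumes "module sc" "module.subspace sc I" "\<And>y z. z \<in> I \<Longrightarrow> z * y \<in> I"
  shows "span_prod sc (*) I J \<subseteq> I"
  unfolding span_prod_def using assms by (intro module.span_minimal) auto

lemma two_sided_idealI:
  assumes "module sc" "module.subspace sc I"
    and "\<And>y z. z \<in> I \<Longrightarrow> y * z \<in> I" "\<And>y z. z \<in> I \<Longrightarrow> z * y \<in> I"
  shows "two_sided_ideal I"
  using assms module.subspace_0 module.subspace_add module.subspace_neg
  unfolding two_sided_ideal_def by metis

lemma Is_set_mult_left: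
  assumes "cplx_algebra scB" "z \<in> Is_set scA scB sL"
  shows "y * z \<in> Is_set scA scB sL"
  unfolding Is_set_def
proof (rule linear_in_span[OF cplx_algebra_linear_mult_left[OF assms(1)]])
  fix g
  assume "g \<in> {phi a | phi a. Vector_Spaces.linear scA scB phi \<and> (\<forall>x a'. phi (sL x a') = x * phi a')}"
    (is "_ \<in> ?G")
  then obtain phi a where "g = phi a" "Vector_Spaces.linear scA scB phi"
    and phi: "\<forall>x a'. phi (sL x a') = x * phi a'" by blast
  moreover have "y * g = phi (sL y a)"
    using \<open>g = phi a\<close> phi by simp
  ultimately have "y * g \<in> ?G"
    by blast
  then show "y * g \<in> module.span scB ?G"
    by (rule module.span_base[OF cplx_algebra_module[OF assms(1)]])
qed (use assms(2) in \<open>simp add: Is_set_def\<close>)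

lemma It_set_mult_right:
  assumes "cplx_algebra scB" "z \<in> It_set scA scB tL"
  shows "z * y \<in> It_set scA scB tL"
  unfolding It_set_def
proof (rule linear_in_span[OF cplx_algebra_linear_mult_right[OF assms(1)]])
  fix g
  assume "g \<in> {psi a | psi a. Vector_Spaces.linear scA scB psi \<and> (\<forall>x a'. psi (tL x a') = psi a' * x)}"
    (is "_ \<in> ?G")
  then obtain psi a where "g = psi a" "Vector_Spaces.linear scA scB psi"
    and psi: "\<forall>x a'. psi (tL x a') = psi a' * x" by blast
  moreover have "g * y = psi (tL y a)"
    using \<open>g = psi a\<close> psi by simp
  ultimately have "g * y \<in> ?G"
    by blast
  then show "g * y \<in> module.span scB ?G"
    by (rule module.span_base[OF cplx_algebra_module[OF assms(1)]])
qed (use assms(2) in \<open>simp add: It_set_def\<close>)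

lemma Is_set_subset_span_prod:
  assumes "cplx_algebra scB" "span_prod scA sL J UNIV = UNIV"
  shows "Is_set scA scB sL \<subseteq> span_prod scB (*) J (Is_set scA scB sL)"
proof -
  note M = cplx_algebra_module[OF assms(1)]
  have "phi a \<in> span_prod scB (*) J (Is_set scA scB sL)"
    if phi: "Vector_Spaces.linear scA scB phi" "\<forall>x a'. phi (sL x a') = x * phi a'" for phi a
  proof -
    have "a \<in> module.span scA {sL x b | x b. x \<in> J \<and> b \<in> UNIV}"
      using assms(2) unfolding span_prod_def by blast
    then show ?thesis
      unfolding span_prod_def
    proof (rule linear_in_span[OF phi(1), rotated])
      fix z
      assume "z \<in> {sL x b | x b. x \<in> J \<and> b \<in> UNIV}"
      then obtain x b where "z = sL x b" "x \<in> J" by blast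
      moreover have "phi b \<in> Is_set scA scB sL"
        using phi unfolding Is_set_def by (blast intro: module.span_base[OF M])
      ultimately show "phi z \<in> module.span scB {x * y | x y. x \<in> J \<and> y \<in> Is_set scA scB sL}"
        using phi(2) by (auto intro: module.span_base[OF M])
    qed
  qed
  moreover have "module.subspace scB (span_prod scB (*) J (Is_set scA scB sL))"
    unfolding span_prod_def by (rule module.subspace_span[OF M])
  ultimately show ?thesis
    by (subst (1) Is_set_def) (rule module.span_minimal[OF M]; blast)
qed

lemma It_set_subset_span_prod:
  assumes "cplx_algebra scB" "span_prod scA tL J UNIV = UNIV"
  shows "It_set scA scB tL \<subseteq> span_prod scB (*) (It_set scA scB tL) J"
proof -
  note M = cplx_algebra_module[OF assms(1)]
  have "psi a \<in> span_prod scB (*) (It_set scA scB tL) J"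
    if psi: "Vector_Spaces.linear scA scB psi" "\<forall>x a'. psi (tL x a') = psi a' * x" for psi a
  proof -
    have "a \<in> module.span scA {tL x b | x b. x \<in> J \<and> b \<in> UNIV}"
      using assms(2) unfolding span_prod_def by blast
    then show ?thesis
      unfolding span_prod_def
    proof (rule linear_in_span[OF psi(1), rotated])
      fix z
      assume "z \<in> {tL x b | x b. x \<in> J \<and> b \<in> UNIV}"
      then obtain x b where "z = tL x b" "x \<in> J" by blast
      moreover have "psi b \<in> It_set scA scB tL"
        using psi unfolding It_set_def by (blast intro: module.span_base[OF M])
      ultimately show "psi z \<in> module.span scB {x * y | x y. x \<in> It_set scA scB tL \<and> y \<in> J}"
        using psi(2) by (auto intro: module.span_base[OF M])
    qed
  qed
  moreover have "module.subspace scB (span_prod scB (*) (It_set scA scB tL) J)"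
    unfolding span_prod_def by (rule module.subspace_span[OF M])
  ultimately show ?thesis
    by (subst (1) It_set_def) (rule module.span_minimal[OF M]; blast)
qed

lemma left_annihilator_eq_0:
  assumes "inj sL" "\<And>a. sL 0 a = 0" "\<And>x y a. sL (x * y) a = sL x (sL y a)"
    and "Vector_Spaces.linear scA scA (sL x)"
    and "span_prod scA sL I UNIV = UNIV" "\<forall>y\<in>I. x * y = 0"
  shows "x = 0"
proof -
  interpret L: Vector_Spaces.linear scA scA "sL x" by fact
  have "sL x a \<in> L.vs1.span {}" for a
  proof (rule linear_in_span[OF assms(4)])
    show "a \<in> L.vs1.span {sL y b | y b. y \<in> I \<and> b \<in> UNIV}"
      using assms(5) unfolding span_prod_def by blast
  qed (use assms(2,3,6) in \<open>auto simp flip: assms(3)\<close>)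
  then have "sL x = sL 0"
    using assms(2) by auto
  with assms(1) show "x = 0" by (simp add: inj_eq)
qed

lemma right_annihilator_eq_0:
  assumes "inj tL" "\<And>a. tL 0 a = 0" "\<And>x y a. tL (x * y) a = tL y (tL x a)"
    and "Vector_Spaces.linear scA scA (tL x)"
    and "span_prod scA tL I UNIV = UNIV" "\<forall>y\<in>I. y * x = 0"
  shows "x = 0"
proof -
  interpret L: Vector_Spaces.linear scA scA "tL x" by fact
  have "tL x a \<in> L.vs1.span {}" for a
  proof (rule linear_in_span[OF assms(4)])
    show "a \<in> L.vs1.span {tL y b | y b. y \<in> I \<and> b \<in> UNIV}"
      using assms(5) unfolding span_prod_def by blast
  qed (use assms(2,3,6) in \<open>auto simp flip: assms(3)\<close>)
  then have "tL x = tL 0"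
    using assms(2) by auto
  with assms(1) show "x = 0" by (simp add: inj_eq)
qed

lemma left_mult_bialgebroidD:
  assumes "left_mult_bialgebroid scA scB sL sR tL tR Delta"
  shows "cplx_algebra scB"
    and "Vector_Spaces.linear scA scA (sL x)" "Vector_Spaces.linear scA scA (tL x)"
    and "sL (x * y) a = sL x (sL y a)" "tL (x * y) a = tL y (tL x a)"
    and "sL 0 a = 0" "tL 0 a = 0"
    and "inj sL" "inj tL"
proof -
  note H = assms[unfolded left_mult_bialgebroid_def Let_def]
  have "vector_space scA"
    using H unfolding cplx_algebra_def by blast
  then show "Vector_Spaces.linear scA scA (sL x)" "Vector_Spaces.linear scA scA (tL x)"
    using H by (simp_all add: Vector_Spaces.linear_iff)
  have "\<forall>x y a. sL (x + y) a = sL x a + sL y a"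
    using H by (elim conjE) assumption
  moreover have "\<forall>x y a. tL (x + y) a = tL x a + tL y a"
    using H by (elim conjE) assumption
  ultimately show "sL 0 a = 0" "tL 0 a = 0"
    by (metis add_0 add_cancel_right_right)+
  have "\<forall>x y a. sL (x * y) a = sL x (sL y a)"
    using H by (elim conjE) assumption
  then show "sL (x * y) a = sL x (sL y a)" by blast
  have "\<forall>x y a. tL (x * y) a = tL y (tL x a)"
    using H by (elim conjE) assumption
  then show "tL (x * y) a = tL y (tL x a)" by blast
  show "cplx_algebra scB"
    using H by (elim conjE) assumption
  show "inj sL"
    using H by (elim conjE) assumption
  show "inj tL"
    using H by (elim conjE) assumption
qed

theorem lemma3p8:
  fixes scA :: "complex \<Rightarrow> 'a::ring \<Rightarrow> 'a" and scB :: "complex \<Rightarrow> 'b::ring \<Rightarrow> 'b"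
    and sL tL :: "'b \<Rightarrow> 'a \<Rightarrow> 'a" and sR tR :: "'a \<Rightarrow> 'b \<Rightarrow> 'a"
    and Delta :: "'a \<Rightarrow> ('a \<times> 'a) list \<Rightarrow> ('a \<times> 'a) list"
  assumes "left_mult_bialgebroid scA scB sL sR tL tR Delta"
    and "span_prod scA sL (It_set scA scB tL) UNIV = UNIV"
    and "span_prod scA tL (Is_set scA scB sL) UNIV = UNIV"
  shows "It_set scA scB tL = span_prod scB (*) (It_set scA scB tL) (Is_set scA scB sL)
    \<and> span_prod scB (*) (It_set scA scB tL) (Is_set scA scB sL) = Is_set scA scB sL
    \<and> two_sided_ideal (Is_set scA scB sL)
    \<and> idempotent_ideal scB (Is_set scA scB sL)
    \<and> essential_ideal (Is_set scA scB sL)"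
proof -
  let ?Is = "Is_set scA scB sL" and ?It = "It_set scA scB tL"
  note D = left_mult_bialgebroidD[OF assms(1)]
  note M = cplx_algebra_module[OF D(1)]
  have sub_Is: "module.subspace scB ?Is" and sub_It: "module.subspace scB ?It"
    unfolding Is_set_def It_set_def by (simp_all add: module.subspace_span[OF M])
  have "span_prod scB (*) ?It ?Is \<subseteq> ?Is"
    by (rule span_prod_subset_of_left_ideal[OF M sub_Is Is_set_mult_left[OF D(1)]])
  moreover have "span_prod scB (*) ?It ?Is \<subseteq> ?It"
    by (rule span_prod_subset_of_right_ideal[OF M sub_It It_set_mult_right[OF D(1)]])
  ultimately have It_eq: "?It = span_prod scB (*) ?It ?Is" and Is_eq: "span_prod scB (*) ?It ?Is = ?Is"
    using Is_set_subset_span_prod[OF D(1) assms(2)] It_set_subset_span_prod[OF D(1) assms(3)] by auto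
  then have It_Is: "?It = ?Is" by simp
  have "two_sided_ideal ?Is"
  proof (rule two_sided_idealI[OF M sub_Is Is_set_mult_left[OF D(1)]])
    show "z * y \<in> ?Is" if "z \<in> ?Is" for y z
      using It_set_mult_right[OF D(1), of z scA tL y] that It_Is by simp
  qed
  moreover have "idempotent_ideal scB ?Is"
    using Is_eq It_Is unfolding idempotent_ideal_def by simp
  moreover have "essential_ideal ?Is"
    unfolding essential_ideal_def
    using left_annihilator_eq_0[OF D(8,6,4,2) assms(2)[unfolded It_Is]]
      right_annihilator_eq_0[OF D(9,7,5,3) assms(3)] by blast
  ultimately show ?thesis
    using It_eq Is_eq by blast
qed

end
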